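(* Let $X$ and $Y$ be bipartite graphs without isolated vertices. If $B_0(X)$ and $B_0(Y)$ are isomorphic as posets, then $X$ and $Y$ are isomorphic as graphs.
   Context: A graph $X$ is a set $V(X)$ with a symmetric subset $E(X)\subset V(X)\times V(X)$; $N(v)=\{w:(v,w)\in E(X)\}$, and $v$ is isolated if $N(v)=\emptyset$. $X$ is bipartite if there is a graph homomorphism to $K_2$ (vertices $\{1,2\}$, edges $(1,2),(2,1)$); in particular it has no loops. $B_0(X)$ is the poset whose elements are the unordered pairs $\{\sigma,\tau\}$ of non-empty (possibly infinite) subsets of $V(X)$ with $\sigma\times\tau\subset E(X)$, with $\alpha\le\beta$ iff for each $\sigma\in\alpha$ there is $\tau\in\beta$ with $\sigma\subset\tau$. *)

theory Defs
  imports Main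
begin

definition is_graph :: "'a set \<Rightarrow> ('a \<times> 'a) set \<Rightarrow> bool" where
  "is_graph V E \<longleftrightarrow> E \<subseteq> V \<times> V \<and> sym E"

definition no_isolated :: "'a set \<Rightarrow> ('a \<times> 'a) set \<Rightarrow> bool" where
  "no_isolated V E \<longleftrightarrow> (\<forall>v\<in>V. \<exists>w. (v, w) \<in> E)"

definition K2_edges :: "(nat \<times> nat) set" where
  "K2_edges = {(1, 2), (2, 1)}"

definition graph_hom :: "'a set \<Rightarrow> ('a \<times> 'a) set \<Rightarrow> 'b set \<Rightarrow> ('b \<times> 'b) set \<Rightarrow> ('a \<Rightarrow> 'b) \<Rightarrow> bool" where
  "graph_hom V E W F f \<longleftrightarrow> (\<forall>v\<in>V. f v \<in> W) \<and> (\<forall>(v, w)\<in>E. (f v, f w) \<in> F)"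

definition bipartite :: "'a set \<Rightarrow> ('a \<times> 'a) set \<Rightarrow> bool" where
  "bipartite V E \<longleftrightarrow> (\<exists>f. graph_hom V E {1, 2} K2_edges f)"

definition graph_iso :: "'a set \<Rightarrow> ('a \<times> 'a) set \<Rightarrow> 'b set \<Rightarrow> ('b \<times> 'b) set \<Rightarrow> bool" where
  "graph_iso V E W F \<longleftrightarrow> (\<exists>f. bij_betw f V W \<and> (\<forall>v\<in>V. \<forall>w\<in>V. (v, w) \<in> E \<longleftrightarrow> (f v, f w) \<in> F))"

definition B0 :: "'a set \<Rightarrow> ('a \<times> 'a) set \<Rightarrow> 'a set set set" where
  "B0 V E = {{\<sigma>, \<tau>} | \<sigma> \<tau>. \<sigma> \<noteq> {} \<and> \<tau> \<noteq> {} \<and> \<sigma> \<subseteq> V \<and> \<tau> \<subseteq> V \<and> \<sigma> \<times> \<tau> \<subseteq> E}"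

definition B0_le :: "'a set set \<Rightarrow> 'a set set \<Rightarrow> bool" where
  "B0_le \<alpha> \<beta> \<longleftrightarrow> (\<forall>\<sigma>\<in>\<alpha>. \<exists>\<tau>\<in>\<beta>. \<sigma> \<subseteq> \<tau>)"

definition poset_iso :: "'p set \<Rightarrow> ('p \<Rightarrow> 'p \<Rightarrow> bool) \<Rightarrow> 'q set \<Rightarrow> ('q \<Rightarrow> 'q \<Rightarrow> bool) \<Rightarrow> bool" where
  "poset_iso P le Q le' \<longleftrightarrow> (\<exists>f. bij_betw f P Q \<and> (\<forall>x\<in>P. \<forall>y\<in>P. le x y \<longleftrightarrow> le' (f x) (f y)))"

end

theory Submission
  imports Defs
begin

text \<open>
  For a graph without loops and triangles, the atoms of \<open>B\<^sub>0(X)\<close> are the edges \<open>{{a},{b}}\<close>,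
  and two atoms have an upper bound lying above no third atom exactly when the edges share a
  vertex. Call an element a star if all atoms below it pairwise share a vertex; the stars are
  then the pairs \<open>{{u},T}\<close> with \<open>T \<subseteq> N(u)\<close>. The vertex stars \<open>{{v},N(v)}\<close> are recognised
  order-theoretically: they are the maximal stars together with the atoms lying below at most
  one maximal star (the stars of leaves). Two vertices are adjacent iff their vertex stars lie
  above a common atom. The map \<open>v \<mapsto> {{v},N(v)}\<close> is injective except that both ends of an
  isolated edge have the same star, and these stars are exactly the maximal atoms. A poset
  isomorphism thus matches vertex stars with fibres of equal size and preserves the common-atom
  relation, which yields a graph isomorphism.
\<close>

definition is_atom :: "'p set \<Rightarrow> ('p \<Rightarrow> 'p \<Rightarrow> bool) \<Rightarrow> 'p \<Rightarrow> bool" where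
  "is_atom P le x \<longleftrightarrow> x \<in> P \<and> (\<forall>y\<in>P. le y x \<longrightarrow> y = x)"

definition adjacent_atoms :: "'p set \<Rightarrow> ('p \<Rightarrow> 'p \<Rightarrow> bool) \<Rightarrow> 'p \<Rightarrow> 'p \<Rightarrow> bool" where
  "adjacent_atoms P le x y \<longleftrightarrow> is_atom P le x \<and> is_atom P le y \<and> x \<noteq> y \<and>
     (\<exists>b\<in>P. le x b \<and> le y b \<and> (\<forall>z\<in>P. is_atom P le z \<longrightarrow> le z b \<longrightarrow> z = x \<or> z = y))"

definition is_star :: "'p set \<Rightarrow> ('p \<Rightarrow> 'p \<Rightarrow> bool) \<Rightarrow> 'p \<Rightarrow> bool" where
  "is_star P le a \<longleftrightarrow> a \<in> P \<and> (\<forall>x\<in>P. \<forall>y\<in>P. is_atom P le x \<longrightarrow> is_atom P le y \<longrightarrow>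
     le x a \<longrightarrow> le y a \<longrightarrow> x \<noteq> y \<longrightarrow> adjacent_atoms P le x y)"

definition is_max_star :: "'p set \<Rightarrow> ('p \<Rightarrow> 'p \<Rightarrow> bool) \<Rightarrow> 'p \<Rightarrow> bool" where
  "is_max_star P le a \<longleftrightarrow> is_star P le a \<and> (\<forall>b\<in>P. is_star P le b \<longrightarrow> le a b \<longrightarrow> b = a)"

definition is_vertex_star :: "'p set \<Rightarrow> ('p \<Rightarrow> 'p \<Rightarrow> bool) \<Rightarrow> 'p \<Rightarrow> bool" where
  "is_vertex_star P le a \<longleftrightarrow> is_max_star P le a \<or>
     (is_atom P le a \<and> \<not> (\<exists>b\<in>P. \<exists>c\<in>P. is_max_star P le b \<and> is_max_star P le c \<and> b \<noteq> c \<and> le a b \<and> le a c))"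

definition is_maximal_atom :: "'p set \<Rightarrow> ('p \<Rightarrow> 'p \<Rightarrow> bool) \<Rightarrow> 'p \<Rightarrow> bool" where
  "is_maximal_atom P le a \<longleftrightarrow> is_atom P le a \<and> (\<forall>b\<in>P. le a b \<longrightarrow> b = a)"

definition share_atom :: "'p set \<Rightarrow> ('p \<Rightarrow> 'p \<Rightarrow> bool) \<Rightarrow> 'p \<Rightarrow> 'p \<Rightarrow> bool" where
  "share_atom P le x y \<longleftrightarrow> (\<exists>a\<in>P. is_atom P le a \<and> le a x \<and> le a y)"

lemma is_starD:
  "is_star P le a \<Longrightarrow> is_atom P le x \<Longrightarrow> is_atom P le y \<Longrightarrow> le x a \<Longrightarrow> le y a \<Longrightarrow> x \<noteq> y
    \<Longrightarrow> adjacent_atoms P le x y"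
  unfolding is_star_def is_atom_def by blast

lemma maximal_atom_is_max_star: "is_maximal_atom P le a \<Longrightarrow> is_max_star P le a"
  unfolding is_maximal_atom_def is_max_star_def is_star_def is_atom_def by auto

locale order_isomorphism =
  fixes P :: "'p set" and le :: "'p \<Rightarrow> 'p \<Rightarrow> bool"
    and Q :: "'q set" and le' :: "'q \<Rightarrow> 'q \<Rightarrow> bool" and \<phi> :: "'p \<Rightarrow> 'q"
  assumes bij: "bij_betw \<phi> P Q" and le_iff: "\<forall>x\<in>P. \<forall>y\<in>P. le x y \<longleftrightarrow> le' (\<phi> x) (\<phi> y)"
begin

lemma image_eq: "Q = \<phi> ` P"
  using bij by (simp add: bij_betw_def)

lemma eq_iff: "x \<in> P \<Longrightarrow> y \<in> P \<Longrightarrow> \<phi> x = \<phi> y \<longleftrightarrow> x = y"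
  using bij by (auto simp: bij_betw_def inj_on_def)

lemma is_atom_iff: "x \<in> P \<Longrightarrow> is_atom Q le' (\<phi> x) \<longleftrightarrow> is_atom P le x"
  unfolding is_atom_def image_eq using le_iff eq_iff by auto

lemma adjacent_atoms_iff:
  "x \<in> P \<Longrightarrow> y \<in> P \<Longrightarrow> adjacent_atoms Q le' (\<phi> x) (\<phi> y) \<longleftrightarrow> adjacent_atoms P le x y"
  unfolding adjacent_atoms_def image_eq using le_iff eq_iff is_atom_iff[unfolded image_eq] by (auto 0 3)

lemma is_star_iff: "x \<in> P \<Longrightarrow> is_star Q le' (\<phi> x) \<longleftrightarrow> is_star P le x"
  unfolding is_star_def image_eq
  using le_iff eq_iff is_atom_iff[unfolded image_eq] adjacent_atoms_iff[unfolded image_eq] by auto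

lemma is_max_star_iff: "x \<in> P \<Longrightarrow> is_max_star Q le' (\<phi> x) \<longleftrightarrow> is_max_star P le x"
  unfolding is_max_star_def image_eq using le_iff eq_iff is_star_iff[unfolded image_eq] by auto

lemma is_vertex_star_iff: "x \<in> P \<Longrightarrow> is_vertex_star Q le' (\<phi> x) \<longleftrightarrow> is_vertex_star P le x"
  unfolding is_vertex_star_def image_eq
  using le_iff eq_iff is_atom_iff[unfolded image_eq] is_max_star_iff[unfolded image_eq] by auto

lemma is_maximal_atom_iff: "x \<in> P \<Longrightarrow> is_maximal_atom Q le' (\<phi> x) \<longleftrightarrow> is_maximal_atom P le x"
  unfolding is_maximal_atom_def image_eq using le_iff eq_iff is_atom_iff[unfolded image_eq] by auto

lemma share_atom_iff: "x \<in> P \<Longrightarrow> y \<in> P \<Longrightarrow> share_atom Q le' (\<phi> x) (\<phi> y) \<longleftrightarrow> share_atom P le x y"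
  unfolding share_atom_def image_eq using le_iff is_atom_iff[unfolded image_eq] by auto

lemma image_vertex_stars: "\<phi> ` {x\<in>P. is_vertex_star P le x} = {y\<in>Q. is_vertex_star Q le' y}"
  unfolding image_eq using is_vertex_star_iff[unfolded image_eq] by auto

end

lemma bij_betw_fibrewise:
  assumes "L ` V = M ` W"
    and "\<And>v. v \<in> V \<Longrightarrow> \<exists>g. bij_betw g {u\<in>V. L u = L v} {w\<in>W. M w = L v}"
  obtains f where "bij_betw f V W" "\<And>v. v \<in> V \<Longrightarrow> M (f v) = L v"
proof -
  define A where "A m = {u\<in>V. L u = m}" for m
  define B where "B m = {w\<in>W. M w = m}" for m
  have "\<forall>m\<in>L ` V. \<exists>g. bij_betw g (A m) (B m)"
    using assms(2) unfolding A_def B_def by blast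
  then obtain g where g: "\<And>m. m \<in> L ` V \<Longrightarrow> bij_betw (g m) (A m) (B m)"
    by (metis bchoice)
  define f where "f v = g (L v) v" for v
  have f_in: "f v \<in> B (L v)" if "v \<in> V" for v
    using bij_betw_apply[OF g[of "L v"]] that unfolding f_def A_def by simp
  have "inj_on f V"
  proof (rule inj_onI)
    fix x y assume xy: "x \<in> V" "y \<in> V" "f x = f y"
    then have "L x = L y" using f_in[of x] f_in[of y] by (simp add: B_def)
    then have "x \<in> A (L x)" "y \<in> A (L x)" using xy by (simp_all add: A_def)
    with xy \<open>L x = L y\<close> show "x = y"
      using bij_betw_imp_inj_on[OF g[of "L x"]] unfolding f_def inj_on_def by auto
  qed
  moreover have "W \<subseteq> f ` V"
  proof
    fix w assume w: "w \<in> W"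
    then obtain v where v: "v \<in> V" "M w = L v" using assms(1) by (metis imageE imageI)
    then have "w \<in> g (L v) ` A (L v)"
      using w bij_betw_imp_surj_on[OF g[of "L v"]] by (simp add: B_def)
    then obtain u where "u \<in> V" "L u = L v" "w = g (L v) u" by (auto simp: A_def)
    then have "w = f u" by (simp add: f_def)
    with \<open>u \<in> V\<close> show "w \<in> f ` V" by (rule rev_image_eqI)
  qed
  ultimately have "bij_betw f V W" using f_in by (auto simp: bij_betw_def B_def)
  with f_in show ?thesis using that by (simp add: B_def)
qed

lemma B0_le_edge_iff: "B0_le {{x}, {y}} \<beta> \<longleftrightarrow> x \<in> \<Union>\<beta> \<and> y \<in> \<Union>\<beta>"
  unfolding B0_le_def by auto

definition nbhd :: "('a \<times> 'a) set \<Rightarrow> 'a \<Rightarrow> 'a set" where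
  "nbhd E v = {w. (v, w) \<in> E}"

definition vertex_star :: "('a \<times> 'a) set \<Rightarrow> 'a \<Rightarrow> 'a set set" where
  "vertex_star E v = {{v}, nbhd E v}"

text \<open>Bipartiteness enters only through the absence of loops and triangles.\<close>

locale triangle_free_graph =
  fixes V :: "'a set" and E :: "('a \<times> 'a) set"
  assumes edges_subset: "E \<subseteq> V \<times> V" and sym_edges: "sym E"
    and no_loop: "(a, a) \<notin> E"
    and no_triangle: "(a, c) \<in> E \<Longrightarrow> (b, c) \<in> E \<Longrightarrow> (a, b) \<notin> E"
    and has_neighbour: "v \<in> V \<Longrightarrow> \<exists>w. (v, w) \<in> E"

lemma triangle_free_graph_if_bipartite:
  assumes "is_graph V E" "bipartite V E" "no_isolated V E"
  shows "triangle_free_graph V E"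
proof -
  obtain c where c: "\<And>a b. (a, b) \<in> E \<Longrightarrow> (c a, c b) \<in> K2_edges"
    using assms(2) unfolding bipartite_def graph_hom_def by fast
  show ?thesis
  proof
    show "(a, a) \<notin> E" for a using c[of a a] by (auto simp: K2_edges_def)
    show "(a, b) \<notin> E" if "(a, c) \<in> E" "(b, c) \<in> E" for a b c
      using that c[of a c] c[of b c] c[of a b] by (auto simp: K2_edges_def)
  qed (use assms(1,3) in \<open>auto simp: is_graph_def no_isolated_def\<close>)
qed

context triangle_free_graph
begin

abbreviation "P \<equiv> B0 V E"
abbreviation "N \<equiv> nbhd E"
abbreviation "S \<equiv> vertex_star E"

lemma edge_sym: "(a, b) \<in> E \<Longrightarrow> (b, a) \<in> E"
  using sym_edges by (auto simp: sym_def)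

lemma edge_vertices: "(a, b) \<in> E \<Longrightarrow> a \<in> V \<and> b \<in> V"
  using edges_subset by auto

lemma nbhd_nonempty: "v \<in> V \<Longrightarrow> N v \<noteq> {}"
  using has_neighbour by (auto simp: nbhd_def)

lemma mem_B0_iff: "\<alpha> \<in> P \<longleftrightarrow> (\<exists>\<sigma> \<tau>. \<alpha> = {\<sigma>, \<tau>} \<and> \<sigma> \<noteq> {} \<and> \<tau> \<noteq> {} \<and> \<sigma> \<times> \<tau> \<subseteq> E)"
  unfolding B0_def using edges_subset by blast

lemma edge_mem_B0: "(a, b) \<in> E \<Longrightarrow> {{a}, {b}} \<in> P"
  unfolding mem_B0_iff by auto

lemma edge_across_biclique:
  assumes "\<sigma> \<times> \<tau> \<subseteq> E" "\<sigma> \<noteq> {}" "\<tau> \<noteq> {}" "(a, b) \<in> E" "a \<in> \<sigma> \<union> \<tau>" "b \<in> \<sigma> \<union> \<tau>"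
  shows "(a \<in> \<sigma> \<and> b \<in> \<tau>) \<or> (a \<in> \<tau> \<and> b \<in> \<sigma>)"
proof -
  obtain s t where "s \<in> \<sigma>" "t \<in> \<tau>" using assms by auto
  then have "\<not> (a \<in> \<sigma> \<and> b \<in> \<sigma>)" "\<not> (a \<in> \<tau> \<and> b \<in> \<tau>)"
    using no_triangle[of a t b] no_triangle[of a s b] edge_sym assms by blast+
  then show ?thesis using assms by auto
qed

lemma B0_above_edgeE:
  assumes "\<beta> \<in> P" "(a, b) \<in> E" "B0_le {{a}, {b}} \<beta>"
  obtains \<sigma> \<tau> where "\<beta> = {\<sigma>, \<tau>}" "a \<in> \<sigma>" "b \<in> \<tau>" "\<sigma> \<times> \<tau> \<subseteq> E"
proof -
  obtain \<sigma> \<tau> where st: "\<beta> = {\<sigma>, \<tau>}" "\<sigma> \<noteq> {}" "\<tau> \<noteq> {}" "\<sigma> \<times> \<tau> \<subseteq> E"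
    using assms(1) mem_B0_iff by auto
  have "a \<in> \<sigma> \<union> \<tau>" "b \<in> \<sigma> \<union> \<tau>" using assms(3) st(1) by (auto simp: B0_le_edge_iff)
  then consider "a \<in> \<sigma>" "b \<in> \<tau>" | "a \<in> \<tau>" "b \<in> \<sigma>"
    using edge_across_biclique[OF st(4,2,3) assms(2)] by blast
  then show ?thesis
  proof cases
    case 2
    then show ?thesis using that[of \<tau> \<sigma>] st edge_sym by (auto simp: insert_commute)
  qed (use that st in blast)
qed

lemma is_atom_B0_iff: "is_atom P B0_le \<alpha> \<longleftrightarrow> (\<exists>a b. (a, b) \<in> E \<and> \<alpha> = {{a}, {b}})"
proof
  assume atom: "is_atom P B0_le \<alpha>"
  then obtain \<sigma> \<tau> where st: "\<alpha> = {\<sigma>, \<tau>}" "\<sigma> \<noteq> {}" "\<tau> \<noteq> {}" "\<sigma> \<times> \<tau> \<subseteq> E"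
    using mem_B0_iff by (auto simp: is_atom_def)
  then obtain s t where "s \<in> \<sigma>" "t \<in> \<tau>" by auto
  then have "(s, t) \<in> E" "B0_le {{s}, {t}} \<alpha>" using st by (auto simp: B0_le_edge_iff)
  then show "\<exists>a b. (a, b) \<in> E \<and> \<alpha> = {{a}, {b}}"
    using atom edge_mem_B0 unfolding is_atom_def by metis
next
  assume "\<exists>a b. (a, b) \<in> E \<and> \<alpha> = {{a}, {b}}"
  then obtain a b where ab: "(a, b) \<in> E" "\<alpha> = {{a}, {b}}" by auto
  have "\<beta> = \<alpha>" if \<beta>: "\<beta> \<in> P" "B0_le \<beta> \<alpha>" for \<beta>
  proof -
    obtain \<sigma> \<tau> where st: "\<beta> = {\<sigma>, \<tau>}" "\<sigma> \<noteq> {}" "\<tau> \<noteq> {}" "\<sigma> \<times> \<tau> \<subseteq> E"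
      using \<beta>(1) mem_B0_iff by auto
    have "\<sigma> = {a} \<or> \<sigma> = {b}" "\<tau> = {a} \<or> \<tau> = {b}"
      using \<beta>(2) st ab unfolding B0_le_def by auto
    moreover have "\<sigma> \<noteq> \<tau>" using st no_loop by auto
    ultimately show ?thesis using st ab by auto
  qed
  then show "is_atom P B0_le \<alpha>" using ab edge_mem_B0 unfolding is_atom_def by auto
qed

lemma edge_is_atom: "(a, b) \<in> E \<Longrightarrow> is_atom P B0_le {{a}, {b}}"
  using is_atom_B0_iff by blast

lemma adjacent_atoms_if_common_vertex:
  assumes "(u, p) \<in> E" "(u, q) \<in> E" "p \<noteq> q"
  shows "adjacent_atoms P B0_le {{u}, {p}} {{u}, {q}}"
proof -
  let ?\<beta> = "{{u}, {p, q}}"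
  have "?\<beta> \<in> P" using assms mem_B0_iff by blast
  moreover have "B0_le {{u}, {p}} ?\<beta>" "B0_le {{u}, {q}} ?\<beta>" by (auto simp: B0_le_edge_iff)
  moreover have "z = {{u}, {p}} \<or> z = {{u}, {q}}"
    if z: "is_atom P B0_le z" "B0_le z {{u}, {p, q}}" for z
  proof -
    obtain s t where st: "(s, t) \<in> E" "z = {{s}, {t}}" using z(1) is_atom_B0_iff by auto
    have "s \<in> {u, p, q}" "t \<in> {u, p, q}" using z(2) st by (auto simp: B0_le_edge_iff)
    moreover have "(p, q) \<notin> E" using no_triangle[of p u q] edge_sym assms by blast
    ultimately show ?thesis using st no_loop edge_sym by (auto simp: insert_commute)
  qed
  moreover have "{{u}, {p}} \<noteq> {{u}, {q}}" using assms no_loop by (auto simp: doubleton_eq_iff)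
  ultimately show ?thesis
    unfolding adjacent_atoms_def using edge_is_atom[OF assms(1)] edge_is_atom[OF assms(2)]
    by (intro conjI bexI[of _ ?\<beta>]) auto
qed

lemma common_vertex_if_adjacent_atoms:
  assumes ab: "(a, b) \<in> E" and cd: "(c, d) \<in> E" and adj: "adjacent_atoms P B0_le {{a}, {b}} {{c}, {d}}"
  shows "a = c \<or> a = d \<or> b = c \<or> b = d"
proof (rule ccontr)
  assume disjoint: "\<not> ?thesis"
  obtain \<beta> where \<beta>: "\<beta> \<in> P" "B0_le {{a}, {b}} \<beta>" "B0_le {{c}, {d}} \<beta>"
    and only: "\<forall>z\<in>P. is_atom P B0_le z \<longrightarrow> B0_le z \<beta> \<longrightarrow> z = {{a}, {b}} \<or> z = {{c}, {d}}"
    using adj unfolding adjacent_atoms_def by auto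
  obtain \<sigma> \<tau> where st: "\<beta> = {\<sigma>, \<tau>}" "a \<in> \<sigma>" "b \<in> \<tau>" "\<sigma> \<times> \<tau> \<subseteq> E"
    using B0_above_edgeE[OF \<beta>(1) ab \<beta>(2)] .
  have "c \<in> \<sigma> \<union> \<tau>" "d \<in> \<sigma> \<union> \<tau>" using \<beta>(3) st(1) by (auto simp: B0_le_edge_iff)
  moreover have "\<sigma> \<noteq> {}" "\<tau> \<noteq> {}" using st by auto
  ultimately obtain e where e: "e \<in> {c, d}" "e \<in> \<tau>"
    using edge_across_biclique[OF st(4) _ _ cd] by blast
  then have ae: "(a, e) \<in> E" and "B0_le {{a}, {e}} \<beta>" using st by (auto simp: B0_le_edge_iff)
  then have "{{a}, {e}} = {{a}, {b}} \<or> {{a}, {e}} = {{c}, {d}}"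
    using only edge_mem_B0[OF ae] edge_is_atom[OF ae] by blast
  then show False using disjoint no_loop[of a] e(1) ae by (auto simp: doubleton_eq_iff)
qed

lemma atom_below_starE:
  assumes "T \<subseteq> N u" "is_atom P B0_le x" "B0_le x {{u}, T}"
  obtains p where "(u, p) \<in> E" "x = {{u}, {p}}"
proof -
  obtain a b where ab: "(a, b) \<in> E" "x = {{a}, {b}}" using assms(2) is_atom_B0_iff by auto
  have "a \<in> {u} \<union> T" "b \<in> {u} \<union> T" using assms(3) ab by (auto simp: B0_le_edge_iff)
  moreover have "\<not> (a \<in> T \<and> b \<in> T)"
    using no_triangle[of a u b] edge_sym ab assms(1) by (auto simp: nbhd_def)
  ultimately show ?thesis
    using that ab no_loop edge_sym assms(1) by (auto simp: nbhd_def insert_commute)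
qed

lemma is_star_B0_iff: "is_star P B0_le \<alpha> \<longleftrightarrow> (\<exists>u T. \<alpha> = {{u}, T} \<and> T \<noteq> {} \<and> T \<subseteq> N u)"
proof
  assume star: "is_star P B0_le \<alpha>"
  then obtain \<sigma> \<tau> where st: "\<alpha> = {\<sigma>, \<tau>}" "\<sigma> \<noteq> {}" "\<tau> \<noteq> {}" "\<sigma> \<times> \<tau> \<subseteq> E"
    using mem_B0_iff by (auto simp: is_star_def)
  txt \<open>Two disjoint edges across \<open>\<sigma> \<times> \<tau>\<close> would be atoms below \<open>\<alpha>\<close> without a common vertex.\<close>
  have "\<sigma> = {s} \<or> \<tau> = {t}" if s: "s \<in> \<sigma>" and t: "t \<in> \<tau>" for s t
  proof (rule ccontr)
    assume "\<not> ?thesis"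
    then obtain s' t' where s't': "s' \<in> \<sigma>" "t' \<in> \<tau>" "s' \<noteq> s" "t' \<noteq> t" using s t by blast
    have e: "(s, t) \<in> E" "(s', t') \<in> E" using s t s't' st(4) by auto
    have disj: "x \<notin> \<tau>" if "x \<in> \<sigma>" for x using that st(4) no_loop by auto
    have "{{s}, {t}} \<noteq> {{s'}, {t'}}" using s t s't' disj by (auto simp: doubleton_eq_iff)
    moreover have "B0_le {{s}, {t}} \<alpha>" "B0_le {{s'}, {t'}} \<alpha>"
      using s t s't' st(1) by (auto simp: B0_le_edge_iff)
    ultimately have "adjacent_atoms P B0_le {{s}, {t}} {{s'}, {t'}}"
      using is_starD[OF star edge_is_atom[OF e(1)] edge_is_atom[OF e(2)]] by blast
    then have "s = s' \<or> s = t' \<or> t = s' \<or> t = t'" using common_vertex_if_adjacent_atoms e by blast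
    then show False using s t s't' disj by blast
  qed
  moreover obtain s t where "s \<in> \<sigma>" "t \<in> \<tau>" using st by blast
  ultimately consider "\<sigma> = {s}" | "\<tau> = {t}" by blast
  then show "\<exists>u T. \<alpha> = {{u}, T} \<and> T \<noteq> {} \<and> T \<subseteq> N u"
  proof cases
    case 1
    then have "\<alpha> = {{s}, \<tau>}" "\<tau> \<subseteq> N s" using st by (auto simp: nbhd_def)
    then show ?thesis using st(3) by blast
  next
    case 2
    then have "\<alpha> = {{t}, \<sigma>}" "\<sigma> \<subseteq> N t" using st edge_sym by (auto simp: nbhd_def)
    then show ?thesis using st(2) by blast
  qed
next
  assume "\<exists>u T. \<alpha> = {{u}, T} \<and> T \<noteq> {} \<and> T \<subseteq> N u"
  then obtain u T where uT: "\<alpha> = {{u}, T}" "T \<noteq> {}" "T \<subseteq> N u" by blast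
  have "\<alpha> \<in> P" using uT unfolding mem_B0_iff nbhd_def by blast
  moreover have "adjacent_atoms P B0_le x y"
    if x: "is_atom P B0_le x" "B0_le x \<alpha>" and y: "is_atom P B0_le y" "B0_le y \<alpha>" and "x \<noteq> y"
    for x y
  proof -
    obtain p where "(u, p) \<in> E" "x = {{u}, {p}}" using atom_below_starE[OF uT(3) x[unfolded uT(1)]] .
    moreover obtain q where "(u, q) \<in> E" "y = {{u}, {q}}" using atom_below_starE[OF uT(3) y[unfolded uT(1)]] .
    ultimately show ?thesis using adjacent_atoms_if_common_vertex \<open>x \<noteq> y\<close> by blast
  qed
  ultimately show "is_star P B0_le \<alpha>" unfolding is_star_def by blast
qed

lemma vertex_star_is_star: "v \<in> V \<Longrightarrow> is_star P B0_le (S v)"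
  unfolding is_star_B0_iff vertex_star_def using nbhd_nonempty by (intro exI[of _ v] exI[of _ "N v"]) simp

lemma vertex_star_mem_B0: "v \<in> V \<Longrightarrow> S v \<in> P"
  using vertex_star_is_star by (simp add: is_star_def)

lemma star_le_vertex_star: "T \<subseteq> N u \<Longrightarrow> B0_le {{u}, T} (S u)"
  unfolding B0_le_def vertex_star_def by auto

lemma vertex_star_eq_iff: "S u = S v \<longleftrightarrow> u = v \<or> (N u = {v} \<and> N v = {u})"
  unfolding vertex_star_def by (auto simp: doubleton_eq_iff)

lemma max_star_is_vertex_star:
  assumes "is_max_star P B0_le \<alpha>"
  shows "\<exists>v\<in>V. \<alpha> = S v"
proof -
  have star: "is_star P B0_le \<alpha>"
    and max: "\<And>\<beta>. \<beta> \<in> P \<Longrightarrow> is_star P B0_le \<beta> \<Longrightarrow> B0_le \<alpha> \<beta> \<Longrightarrow> \<beta> = \<alpha>"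
    using assms unfolding is_max_star_def by auto
  obtain u T where uT: "\<alpha> = {{u}, T}" "T \<noteq> {}" "T \<subseteq> N u" using star[unfolded is_star_B0_iff] by blast
  then have u: "u \<in> V" using edge_vertices by (auto simp: nbhd_def)
  have "B0_le \<alpha> (S u)" using star_le_vertex_star[OF uT(3)] uT(1) by simp
  then have "S u = \<alpha>" by (rule max[OF vertex_star_mem_B0[OF u] vertex_star_is_star[OF u]])
  then show ?thesis using u by auto
qed

lemma vertex_star_is_max_star:
  assumes v: "v \<in> V" and not_leaf: "\<And>w. N v \<noteq> {w}"
  shows "is_max_star P B0_le (S v)"
  unfolding is_max_star_def
proof (intro conjI ballI impI vertex_star_is_star v)
  fix \<beta> assume \<beta>: "\<beta> \<in> P" "is_star P B0_le \<beta>" "B0_le (S v) \<beta>"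
  obtain u T where uT: "\<beta> = {{u}, T}" "T \<noteq> {}" "T \<subseteq> N u" using \<beta>(2)[unfolded is_star_B0_iff] by blast
  have v_le: "{v} \<subseteq> {u} \<or> {v} \<subseteq> T" and N_le: "N v \<subseteq> {u} \<or> N v \<subseteq> T"
    using \<beta>(3) uT(1) unfolding B0_le_def vertex_star_def by auto
  have "\<not> N v \<subseteq> {u}" using not_leaf[of u] nbhd_nonempty[OF v] by blast
  then have NT: "N v \<subseteq> T" using N_le by blast
  show "\<beta> = S v"
  proof (cases "u = v")
    case True
    then show ?thesis using uT NT by (simp add: vertex_star_def)
  next
    case False
    then have "(u, v) \<in> E" using v_le uT(3) by (auto simp: nbhd_def)
    moreover obtain w where "w \<in> N v" using nbhd_nonempty[OF v] by auto
    then have "(u, w) \<in> E" "(v, w) \<in> E" using NT uT(3) by (auto simp: nbhd_def)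
    ultimately show ?thesis using no_triangle by blast
  qed
qed

lemma leaf_vertex_star_le: "N v = {w} \<Longrightarrow> B0_le (S v) (S w)"
  unfolding vertex_star_def B0_le_def nbhd_def using edge_sym by auto

lemma leaf_vertex_star_not_max_star:
  assumes "N v = {w}" "N w \<noteq> {v}"
  shows "\<not> is_max_star P B0_le (S v)"
proof
  assume max: "is_max_star P B0_le (S v)"
  have e: "(v, w) \<in> E" using assms(1) by (auto simp: nbhd_def)
  then have w: "w \<in> V" using edge_vertices by blast
  have "S w = S v"
    using max vertex_star_mem_B0[OF w] vertex_star_is_star[OF w] leaf_vertex_star_le[OF assms(1)]
    unfolding is_max_star_def by blast
  then show False using assms e no_loop[of v] unfolding vertex_star_eq_iff by auto
qed

lemma is_maximal_atom_vertex_star_iff: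
  assumes v: "v \<in> V"
  shows "is_maximal_atom P B0_le (S v) \<longleftrightarrow> (\<exists>w. N v = {w} \<and> N w = {v})"
proof
  assume max: "is_maximal_atom P B0_le (S v)"
  then have "is_atom P B0_le (S v)" by (simp add: is_maximal_atom_def)
  then obtain a b where "(a, b) \<in> E" "S v = {{a}, {b}}" unfolding is_atom_B0_iff by blast
  then obtain w where w: "N v = {w}" unfolding vertex_star_def by (auto simp: doubleton_eq_iff)
  then have e: "(v, w) \<in> E" by (auto simp: nbhd_def)
  then have wV: "w \<in> V" using edge_vertices by blast
  have "S w = S v"
    using max vertex_star_mem_B0[OF wV] leaf_vertex_star_le[OF w] unfolding is_maximal_atom_def by blast
  then show "\<exists>w. N v = {w} \<and> N w = {v}" using w e no_loop[of v] unfolding vertex_star_eq_iff by auto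
next
  assume "\<exists>w. N v = {w} \<and> N w = {v}"
  then obtain w where w: "N v = {w}" "N w = {v}" by blast
  have e: "(v, w) \<in> E" using w by (auto simp: nbhd_def)
  have Sv: "S v = {{v}, {w}}" using w by (simp add: vertex_star_def)
  have "\<beta> = S v" if \<beta>: "\<beta> \<in> P" "B0_le (S v) \<beta>" for \<beta>
  proof -
    obtain \<sigma> \<tau> where st: "\<beta> = {\<sigma>, \<tau>}" "v \<in> \<sigma>" "w \<in> \<tau>" "\<sigma> \<times> \<tau> \<subseteq> E"
      using B0_above_edgeE[OF \<beta>(1) e] \<beta>(2) unfolding Sv by blast
    then have "\<tau> \<subseteq> N v" "\<sigma> \<subseteq> N w" using edge_sym by (auto simp: nbhd_def)
    then show ?thesis using st w Sv by auto
  qed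
  then show "is_maximal_atom P B0_le (S v)"
    unfolding is_maximal_atom_def using edge_is_atom[OF e] Sv by auto
qed

lemma vertex_star_if_is_vertex_star:
  assumes "is_vertex_star P B0_le \<alpha>"
  shows "\<exists>v\<in>V. \<alpha> = S v"
proof (cases "is_max_star P B0_le \<alpha>")
  case True
  then show ?thesis by (rule max_star_is_vertex_star)
next
  case False
  then have atom: "is_atom P B0_le \<alpha>"
    and not_below_two: "\<not> (\<exists>\<beta>\<in>P. \<exists>\<gamma>\<in>P. is_max_star P B0_le \<beta> \<and> is_max_star P B0_le \<gamma> \<and> \<beta> \<noteq> \<gamma> \<and>
      B0_le \<alpha> \<beta> \<and> B0_le \<alpha> \<gamma>)"
    using assms unfolding is_vertex_star_def by auto
  obtain a b where ab: "(a, b) \<in> E" "\<alpha> = {{a}, {b}}" using atom[unfolded is_atom_B0_iff] by blast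
  then have a: "a \<in> V" and b: "b \<in> V" using edge_vertices by auto
  have ba: "(b, a) \<in> E" using edge_sym[OF ab(1)] .
  show ?thesis
  proof (cases "N a = {b} \<or> N b = {a}")
    case True
    then have "\<alpha> = S a \<or> \<alpha> = S b" using ab(2) by (auto simp: vertex_star_def insert_commute)
    then show ?thesis using a b by blast
  next
    case False
    have "b \<in> N a" "a \<in> N b" using ab(1) ba by (simp_all add: nbhd_def)
    then have "N a \<noteq> {w}" "N b \<noteq> {w}" for w using False by auto
    then have "is_max_star P B0_le (S a)" "is_max_star P B0_le (S b)"
      using vertex_star_is_max_star[OF a] vertex_star_is_max_star[OF b] by blast+
    moreover have "S a \<noteq> S b" using False ab(1) no_loop[of a] unfolding vertex_star_eq_iff by auto
    moreover have "B0_le \<alpha> (S a)" "B0_le \<alpha> (S b)"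
      using ab ba by (auto simp: B0_le_edge_iff vertex_star_def nbhd_def)
    ultimately show ?thesis using not_below_two vertex_star_mem_B0[OF a] vertex_star_mem_B0[OF b] by blast
  qed
qed

lemma is_vertex_star_vertex_star:
  assumes v: "v \<in> V"
  shows "is_vertex_star P B0_le (S v)"
proof (cases "\<exists>w. N v = {w}")
  case False
  then show ?thesis using vertex_star_is_max_star[OF v] by (simp add: is_vertex_star_def)
next
  case True
  then obtain w where w: "N v = {w}" by blast
  have e: "(v, w) \<in> E" using w by (auto simp: nbhd_def)
  have Sv: "S v = {{v}, {w}}" using w by (simp add: vertex_star_def)
  show ?thesis
  proof (cases "N w = {v}")
    case True
    then have "is_maximal_atom P B0_le (S v)" using is_maximal_atom_vertex_star_iff[OF v] w by blast
    then show ?thesis by (simp add: maximal_atom_is_max_star is_vertex_star_def)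
  next
    case False
    have "\<beta> = S w" if \<beta>: "is_max_star P B0_le \<beta>" "B0_le (S v) \<beta>" for \<beta>
    proof -
      obtain u where u: "u \<in> V" "\<beta> = S u" using max_star_is_vertex_star[OF \<beta>(1)] by blast
      then have "u \<noteq> v" using leaf_vertex_star_not_max_star[OF w False] \<beta>(1) by blast
      moreover have "v \<in> {u} \<union> N u" "w \<in> {u} \<union> N u"
        using \<beta>(2) u(2) Sv by (auto simp: B0_le_edge_iff vertex_star_def)
      ultimately have "(u, v) \<in> E" "u = w \<or> (u, w) \<in> E" by (auto simp: nbhd_def)
      then have "u = w" using no_triangle[of u w v] e edge_sym by blast
      then show ?thesis using u by simp
    qed
    then show ?thesis using edge_is_atom[OF e] Sv by (auto simp: is_vertex_star_def)
  qed
qed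

lemma vertex_stars_B0: "{\<alpha>\<in>P. is_vertex_star P B0_le \<alpha>} = S ` V"
  using vertex_star_if_is_vertex_star is_vertex_star_vertex_star vertex_star_mem_B0 by auto

lemma edge_iff_share_atom:
  assumes "v \<in> V" "w \<in> V"
  shows "(v, w) \<in> E \<longleftrightarrow> v \<noteq> w \<and> share_atom P B0_le (S v) (S w)"
proof
  assume e: "(v, w) \<in> E"
  then have "B0_le {{v}, {w}} (S v)" "B0_le {{v}, {w}} (S w)"
    using edge_sym by (auto simp: B0_le_edge_iff vertex_star_def nbhd_def)
  then show "v \<noteq> w \<and> share_atom P B0_le (S v) (S w)"
    using e no_loop[of v] edge_mem_B0[OF e] edge_is_atom[OF e] unfolding share_atom_def by blast
next
  assume "v \<noteq> w \<and> share_atom P B0_le (S v) (S w)"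
  then obtain \<alpha> where vw: "v \<noteq> w" and \<alpha>: "is_atom P B0_le \<alpha>" "B0_le \<alpha> (S v)" "B0_le \<alpha> (S w)"
    unfolding share_atom_def by blast
  obtain p where "\<alpha> = {{v}, {p}}"
    using atom_below_starE[OF subset_refl \<alpha>(1) \<alpha>(2)[unfolded vertex_star_def]] .
  moreover obtain q where "(w, q) \<in> E" "\<alpha> = {{w}, {q}}"
    using atom_below_starE[OF subset_refl \<alpha>(1) \<alpha>(3)[unfolded vertex_star_def]] .
  ultimately show "(v, w) \<in> E" using vw edge_sym by (auto simp: doubleton_eq_iff)
qed

lemma vertex_star_fibre:
  assumes v: "v \<in> V"
  shows "finite {u\<in>V. S u = S v} \<and> card {u\<in>V. S u = S v} = (if is_maximal_atom P B0_le (S v) then 2 else 1)"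
proof (cases "\<exists>w. N v = {w} \<and> N w = {v}")
  case True
  then obtain w where w: "N v = {w}" "N w = {v}" by blast
  then have e: "(v, w) \<in> E" by (auto simp: nbhd_def)
  then have "{u\<in>V. S u = S v} = {v, w}" "v \<noteq> w"
    using v w edge_vertices[OF e] no_loop[of v] unfolding vertex_star_eq_iff by auto
  then show ?thesis using True is_maximal_atom_vertex_star_iff[OF v] by simp
next
  case False
  then have "{u\<in>V. S u = S v} = {v}" using v unfolding vertex_star_eq_iff by auto
  then show ?thesis using False is_maximal_atom_vertex_star_iff[OF v] by simp
qed

end

lemma poset_iso_iff_order_isomorphism: "poset_iso P le Q le' \<longleftrightarrow> (\<exists>\<phi>. order_isomorphism P le Q le' \<phi>)"
  unfolding poset_iso_def order_isomorphism_def by blast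

lemma vertex_bijection_if_B0_iso:
  assumes "triangle_free_graph V E" "triangle_free_graph W F"
    and "order_isomorphism (B0 V E) B0_le (B0 W F) B0_le \<phi>"
  obtains f where "bij_betw f V W" "\<And>v. v \<in> V \<Longrightarrow> vertex_star F (f v) = \<phi> (vertex_star E v)"
proof -
  interpret X: triangle_free_graph V E by fact
  interpret Y: triangle_free_graph W F by fact
  interpret I: order_isomorphism "B0 V E" B0_le "B0 W F" B0_le \<phi> by fact
  have stars: "(\<phi> \<circ> vertex_star E) ` V = vertex_star F ` W"
    using I.image_vertex_stars unfolding X.vertex_stars_B0 Y.vertex_stars_B0 image_comp .
  have fibres: "\<exists>g. bij_betw g {u\<in>V. \<phi> (vertex_star E u) = \<phi> (vertex_star E v)}
                       {w\<in>W. vertex_star F w = \<phi> (vertex_star E v)}" if v: "v \<in> V" for v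
  proof -
    obtain w where w: "w \<in> W" "vertex_star F w = \<phi> (vertex_star E v)"
      using stars v by (metis comp_apply imageE imageI)
    have "{u\<in>V. \<phi> (vertex_star E u) = \<phi> (vertex_star E v)} = {u\<in>V. vertex_star E u = vertex_star E v}"
      using I.eq_iff X.vertex_star_mem_B0 v by auto
    moreover have "is_maximal_atom (B0 W F) B0_le (vertex_star F w)
        \<longleftrightarrow> is_maximal_atom (B0 V E) B0_le (vertex_star E v)"
      using I.is_maximal_atom_iff[OF X.vertex_star_mem_B0[OF v]] w(2) by simp
    ultimately show ?thesis
      using X.vertex_star_fibre[OF v] Y.vertex_star_fibre[OF w(1)] w(2) by (simp add: bij_betw_iff_card)
  qed
  obtain f where "bij_betw f V W" "\<And>v. v \<in> V \<Longrightarrow> vertex_star F (f v) = (\<phi> \<circ> vertex_star E) v"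
    using bij_betw_fibrewise[OF stars] fibres by auto
  then show ?thesis using that by simp
qed

theorem proposition4p4:
  fixes V :: "'a set" and E :: "('a \<times> 'a) set"
    and W :: "'b set" and F :: "('b \<times> 'b) set"
  assumes "is_graph V E" and "bipartite V E" and "no_isolated V E"
    and "is_graph W F" and "bipartite W F" and "no_isolated W F"
    and "poset_iso (B0 V E) B0_le (B0 W F) B0_le"
  shows "graph_iso V E W F"
proof -
  interpret X: triangle_free_graph V E using assms(1-3) by (rule triangle_free_graph_if_bipartite)
  interpret Y: triangle_free_graph W F using assms(4-6) by (rule triangle_free_graph_if_bipartite)
  obtain \<phi> where iso: "order_isomorphism (B0 V E) B0_le (B0 W F) B0_le \<phi>"
    using assms(7) poset_iso_iff_order_isomorphism by blast
  interpret I: order_isomorphism "B0 V E" B0_le "B0 W F" B0_le \<phi> by (fact iso)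
  obtain f where f: "bij_betw f V W" "\<And>v. v \<in> V \<Longrightarrow> vertex_star F (f v) = \<phi> (vertex_star E v)"
    using vertex_bijection_if_B0_iso[OF X.triangle_free_graph_axioms Y.triangle_free_graph_axioms iso] by blast
  have "(v, w) \<in> E \<longleftrightarrow> (f v, f w) \<in> F" if "v \<in> V" "w \<in> V" for v w
  proof -
    have "f v \<in> W" "f w \<in> W" "f v = f w \<longleftrightarrow> v = w"
      using f(1) that by (auto simp: bij_betw_def inj_on_def)
    then show ?thesis
      using X.edge_iff_share_atom[OF that] Y.edge_iff_share_atom I.share_atom_iff X.vertex_star_mem_B0 f(2) that
      by simp
  qed
  then show ?thesis unfolding graph_iso_def using f(1) by blast
qed

end
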